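(* Let $K$ be a field of characteristic $\neq2$ and let $\tau=(-1,1,1,-1)$ or $\tau=(1,-1,-1,1)$. Then $\mathrm{Aut}\,A_\tau=G_3$, where $$G_3=\{\varphi\in\mathrm{Aut}\,K\langle x_1,x_2\rangle\mid \varphi=(\alpha_1x_1,\beta_2x_2)\ \text{or}\ \varphi=(\beta_1x_2,\alpha_2x_1),\ \alpha_1,\beta_2,\alpha_2,\beta_1\in K^*\}.$$
   Context: $A=K\langle x_1,x_2\rangle$ is the free associative algebra with unit on $x_1,x_2$; $\varphi=(f_1,f_2)$ denotes the algebra endomorphism with $\varphi(x_1)=f_1$, $\varphi(x_2)=f_2$. For $q_{ij}\in K$, the diagonal braiding $\tau=(q_{11},q_{12},q_{21},q_{22})$ on $A$ is the linear map $A\otimes A\to A\otimes A$ given on words $u,v$ by $(u\otimes v)\tau=q_{11}^{s_1t_1}q_{12}^{s_1t_2}q_{21}^{s_2t_1}q_{22}^{s_2t_2}\,(v\otimes u)$, where $s_i$ (resp. $t_i$) is the number of occurrences of $x_i$ in $u$ (resp. $v$). $A_\tau$ is $A$ equipped with $\tau$, and $\mathrm{Aut}\,A_\tau$ is the group of algebra automorphisms $\varphi$ of $A$ satisfying $(\varphi\otimes\varphi)((w)\tau)=((\varphi\otimes\varphi)(w))\tau$ for all $w\in A\otimes A$, viewed as a subgroup of $\mathrm{Aut}\,K\langle x_1,x_2\rangle$. *)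

theory Defs
  imports Main
begin

text \<open>The free associative algebra K<x1,x2> is modelled concretely: an element is a
  finitely supported coefficient function on words over the two letters X1, X2.
  The tensor product A \<otimes> A is modelled as finitely supported coefficient functions
  on pairs of words (basis u \<otimes> v).\<close>

datatype var = X1 | X2

type_synonym word = "var list"

definition fa_elem :: "(word \<Rightarrow> 'k::zero) \<Rightarrow> bool" where
  "fa_elem p \<longleftrightarrow> finite {w. p w \<noteq> 0}"

definition tens_elem :: "(word \<times> word \<Rightarrow> 'k::zero) \<Rightarrow> bool" where
  "tens_elem t \<longleftrightarrow> finite {uv. t uv \<noteq> 0}"

definition fa_one :: "word \<Rightarrow> 'k::{zero,one}" where
  "fa_one = (\<lambda>w. if w = [] then 1 else 0)"

definition fa_var :: "var \<Rightarrow> word \<Rightarrow> 'k::{zero,one}" where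
  "fa_var i = (\<lambda>w. if w = [i] then 1 else 0)"

definition fa_smult :: "'k::times \<Rightarrow> (word \<Rightarrow> 'k) \<Rightarrow> word \<Rightarrow> 'k" where
  "fa_smult c p = (\<lambda>w. c * p w)"

definition fa_mult :: "(word \<Rightarrow> 'k::comm_semiring_0) \<Rightarrow> (word \<Rightarrow> 'k) \<Rightarrow> word \<Rightarrow> 'k" where
  "fa_mult p q = (\<lambda>w. \<Sum>(u,v)\<in>{(u,v). u @ v = w}. p u * q v)"

definition fa_subst_word :: "(var \<Rightarrow> word \<Rightarrow> 'k::comm_semiring_1) \<Rightarrow> word \<Rightarrow> word \<Rightarrow> 'k" where
  "fa_subst_word f w = foldr (\<lambda>a acc. fa_mult (f a) acc) w fa_one"

text \<open>The algebra endomorphism \<phi> = (f X1, f X2) of K<x1,x2>, applied to an element.\<close>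
definition fa_apply :: "(var \<Rightarrow> word \<Rightarrow> 'k::comm_semiring_1) \<Rightarrow> (word \<Rightarrow> 'k) \<Rightarrow> word \<Rightarrow> 'k" where
  "fa_apply f p = (\<lambda>z. \<Sum>w\<in>{w. p w \<noteq> 0}. p w * fa_subst_word f w z)"

definition tens_apply :: "(var \<Rightarrow> word \<Rightarrow> 'k::comm_semiring_1) \<Rightarrow> (word \<times> word \<Rightarrow> 'k) \<Rightarrow> word \<times> word \<Rightarrow> 'k" where
  "tens_apply f t = (\<lambda>(z1,z2). \<Sum>(u,v)\<in>{uv. t uv \<noteq> 0}.
      t (u,v) * fa_subst_word f u z1 * fa_subst_word f v z2)"

definition cnt :: "var \<Rightarrow> word \<Rightarrow> nat" where
  "cnt i w = length (filter (\<lambda>a. a = i) w)"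

definition braid_coeff :: "(var \<Rightarrow> var \<Rightarrow> 'k::comm_monoid_mult) \<Rightarrow> word \<Rightarrow> word \<Rightarrow> 'k" where
  "braid_coeff Q u v = (\<Prod>i\<in>(UNIV::var set). \<Prod>j\<in>(UNIV::var set). Q i j ^ (cnt i u * cnt j v))"

text \<open>The diagonal braiding \<tau>: (u \<otimes> v)\<tau> = q(u,v) (v \<otimes> u), extended linearly.\<close>
definition braid :: "(var \<Rightarrow> var \<Rightarrow> 'k::comm_semiring_1) \<Rightarrow> (word \<times> word \<Rightarrow> 'k) \<Rightarrow> word \<times> word \<Rightarrow> 'k" where
  "braid Q t = (\<lambda>(a,b). braid_coeff Q b a * t (b,a))"

definition fa_aut :: "(var \<Rightarrow> word \<Rightarrow> 'k::comm_semiring_1) \<Rightarrow> bool" where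
  "fa_aut f \<longleftrightarrow> (\<forall>i. fa_elem (f i)) \<and>
     bij_betw (fa_apply f) {p. fa_elem p} {p. fa_elem p}"

definition aut_braided :: "(var \<Rightarrow> var \<Rightarrow> 'k::comm_semiring_1) \<Rightarrow> (var \<Rightarrow> word \<Rightarrow> 'k) set" where
  "aut_braided Q = {f. fa_aut f \<and>
     (\<forall>t. tens_elem t \<longrightarrow> tens_apply f (braid Q t) = braid Q (tens_apply f t))}"

definition G3 :: "(var \<Rightarrow> word \<Rightarrow> 'k::field) set" where
  "G3 = {f. fa_aut f \<and>
     ((\<exists>a1 b2. a1 \<noteq> 0 \<and> b2 \<noteq> 0 \<and> f X1 = fa_smult a1 (fa_var X1) \<and> f X2 = fa_smult b2 (fa_var X2)) \<or>
      (\<exists>b1 a2. b1 \<noteq> 0 \<and> a2 \<noteq> 0 \<and> f X1 = fa_smult b1 (fa_var X2) \<and> f X2 = fa_smult a2 (fa_var X1)))}"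

definition tau_of :: "'k \<Rightarrow> 'k \<Rightarrow> 'k \<Rightarrow> 'k \<Rightarrow> var \<Rightarrow> var \<Rightarrow> 'k" where
  "tau_of q11 q12 q21 q22 = (\<lambda>i j. case (i, j) of
      (X1, X1) \<Rightarrow> q11 | (X1, X2) \<Rightarrow> q12 | (X2, X1) \<Rightarrow> q21 | (X2, X2) \<Rightarrow> q22)"

end

theory Submission
  imports Defs
begin

text \<open>Let \<open>\<phi>\<close> preserve the braiding. Testing the compatibility on \<open>x\<^sub>i \<otimes> x\<^sub>j\<close> shows that
  the braiding coefficient between any two monomials \<open>u\<close> of \<open>\<phi>(x\<^sub>1)\<close> and \<open>v\<close> of \<open>\<phi>(x\<^sub>2)\<close>
  is the one between the letters; for both braidings this makes
  \<open>s\<^sub>1(u) t\<^sub>2(v) + s\<^sub>2(u) t\<^sub>1(v)\<close> odd. So the exponent vectors of the leading monomials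
  (for a length-lexicographic order) are linearly independent, whence the leading monomials
  freely generate a submonoid and the leading monomial of \<open>\<phi>(p)\<close> is the image of that of \<open>p\<close>.
  Surjectivity then forces the leading monomials to be letters, so \<open>\<phi>\<close> is linear, and the
  parity condition on letters makes it diagonal or antidiagonal. Conversely both braidings
  are invariant under exchanging \<open>x\<^sub>1\<close> and \<open>x\<^sub>2\<close>, so these automorphisms preserve them.\<close>

lemma UNIV_var: "(UNIV::var set) = {X1, X2}"
  using var.exhaust by auto

lemma var_other: "z \<noteq> y \<Longrightarrow> x \<noteq> y \<Longrightarrow> z = (x::var)"
  by (cases x; cases y; cases z) auto

lemma cnt_Nil [simp]: "cnt i [] = 0"
  by (simp add: cnt_def)

lemma cnt_Cons [simp]: "cnt i (a # w) = (if a = i then 1 else 0) + cnt i w"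
  by (simp add: cnt_def)

lemma cnt_append [simp]: "cnt i (u @ v) = cnt i u + cnt i v"
  by (simp add: cnt_def)

lemma finite_splits: "finite {(u, v). u @ v = (w::'a list)}"
proof -
  have "{(u, v). u @ v = w} \<subseteq> (\<lambda>i. (take i w, drop i w)) ` {..length w}"
  proof
    fix x assume "x \<in> {(u, v). u @ v = w}"
    then obtain u v where "x = (u, v)" "u @ v = w" by auto
    then show "x \<in> (\<lambda>i. (take i w, drop i w)) ` {..length w}"
      by (intro image_eqI[of _ _ "length u"]) auto
  qed
  then show ?thesis by (rule finite_subset) auto
qed

lemma fa_subst_word_Nil [simp]: "fa_subst_word f [] = fa_one"
  by (simp add: fa_subst_word_def)

lemma fa_subst_word_Cons [simp]: "fa_subst_word f (a # w) = fa_mult (f a) (fa_subst_word f w)"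
  by (simp add: fa_subst_word_def)

lemma fa_mult_one_right [simp]: "fa_mult p (fa_one :: word \<Rightarrow> 'k::comm_semiring_1) = p"
proof
  fix w
  have "fa_mult p fa_one w = (\<Sum>uv\<in>{(u, v). u @ v = w}. if uv = (w, []) then p w else 0)"
    unfolding fa_mult_def fa_one_def by (rule sum.cong) (auto split: if_splits)
  also have "\<dots> = p w"
    using sum.delta[OF finite_splits[of w], of "(w, [])" "\<lambda>_. p w"] by simp
  finally show "fa_mult p fa_one w = p w" .
qed

lemma fa_mult_monomials:
  "fa_mult (\<lambda>w. if w = x then (\<alpha>::'k::comm_semiring_1) else 0) (\<lambda>w. if w = y then \<beta> else 0)
   = (\<lambda>w. if w = x @ y then \<alpha> * \<beta> else 0)"
proof
  fix w
  have "fa_mult (\<lambda>w. if w = x then \<alpha> else 0) (\<lambda>w. if w = y then \<beta> else 0) w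
     = (\<Sum>uv\<in>{(u, v). u @ v = w}. if uv = (x, y) then \<alpha> * \<beta> else 0)"
    unfolding fa_mult_def by (rule sum.cong) (auto split: if_splits)
  also have "\<dots> = (if w = x @ y then \<alpha> * \<beta> else 0)"
    using sum.delta[OF finite_splits[of w], of "(x, y)" "\<lambda>_. \<alpha> * \<beta>"] by auto
  finally show "fa_mult (\<lambda>w. if w = x then \<alpha> else 0) (\<lambda>w. if w = y then \<beta> else 0) w
     = (if w = x @ y then \<alpha> * \<beta> else 0)" .
qed

lemma fa_apply_var:
  fixes f :: "var \<Rightarrow> word \<Rightarrow> 'k::comm_semiring_1"
  shows "fa_apply f (fa_var a) = f a"
proof
  fix z
  have "{w. (fa_var a :: word \<Rightarrow> 'k) w \<noteq> 0} = {[a]}" by (auto simp: fa_var_def)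
  then show "fa_apply f (fa_var a) z = f a z" by (simp add: fa_apply_def fa_var_def)
qed

lemma fa_elem_fa_var: "fa_elem (fa_var a :: word \<Rightarrow> 'k::zero_neq_one)"
  by (simp add: fa_elem_def fa_var_def)

lemma fa_eq_smult_var_if_support:
  fixes p :: "word \<Rightarrow> 'k::field"
  assumes "\<And>w. p w \<noteq> 0 \<Longrightarrow> w = [x]"
  shows "p = fa_smult (p [x]) (fa_var x)"
proof
  fix w show "p w = fa_smult (p [x]) (fa_var x) w"
    using assms[of w] by (cases "w = [x]") (auto simp: fa_smult_def fa_var_def)
qed

section \<open>A monomial order on words\<close>

fun letter_bit :: "var \<Rightarrow> nat" where
  "letter_bit X1 = 0"
| "letter_bit X2 = 1"

fun word_bits :: "word \<Rightarrow> nat" where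
  "word_bits [] = 0"
| "word_bits (a # w) = letter_bit a * 2 ^ length w + word_bits w"

text \<open>The binary number \<open>1w\<close>: comparing ranks is the length-lexicographic order on words.\<close>
definition word_rank :: "word \<Rightarrow> nat" where
  "word_rank w = 2 ^ length w + word_bits w"

lemma letter_bit_le: "letter_bit a \<le> 1"
  by (cases a) auto

lemma word_bits_less: "word_bits w < 2 ^ length w"
proof (induction w)
  case (Cons a w)
  have "letter_bit a * 2 ^ length w \<le> 2 ^ length w" using letter_bit_le[of a] by simp
  moreover have "(2::nat) ^ length (a # w) = 2 ^ length w + 2 ^ length w" by simp
  ultimately show ?case using Cons.IH by (simp only: word_bits.simps)
qed simp

lemma word_bits_append: "word_bits (u @ v) = word_bits u * 2 ^ length v + word_bits v"
  by (induction u) (auto simp: algebra_simps power_add)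

lemma word_rank_append: "word_rank (u @ v) = word_rank u * 2 ^ length v + word_bits v"
  by (simp add: word_rank_def word_bits_append algebra_simps power_add)

lemma word_rank_pos: "0 < word_rank w"
  by (simp add: word_rank_def)

lemma word_rank_less_if_shorter:
  assumes "length u < length v"
  shows "word_rank u < word_rank v"
proof -
  have "word_rank u < 2 ^ Suc (length u)" using word_bits_less[of u] by (simp add: word_rank_def)
  also have "\<dots> \<le> 2 ^ length v" using assms by (intro power_increasing) auto
  also have "\<dots> \<le> word_rank v" by (simp add: word_rank_def)
  finally show ?thesis .
qed

lemma length_le_if_word_rank_le: "word_rank u \<le> word_rank v \<Longrightarrow> length u \<le> length v"
  using word_rank_less_if_shorter[of v u] by linarith

lemma word_bits_inj: "length u = length v \<Longrightarrow> word_bits u = word_bits v \<Longrightarrow> u = v"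
proof (induction u arbitrary: v)
  case (Cons a u)
  then obtain b v' where v: "v = b # v'" "length v' = length u" by (cases v) auto
  have e: "letter_bit a * 2 ^ length u + word_bits u = letter_bit b * 2 ^ length u + word_bits v'"
    using Cons.prems v by simp
  have "word_bits u < 2 ^ length u" "word_bits v' < 2 ^ length u"
    using word_bits_less[of u] word_bits_less[of v'] v by auto
  with e have "letter_bit a = letter_bit b"
    using letter_bit_le[of a] letter_bit_le[of b] by (cases "letter_bit a"; cases "letter_bit b") auto
  then have "a = b" by (cases a; cases b) auto
  with e Cons.IH v show ?case by simp
qed simp

lemma word_rank_inj: "word_rank u = word_rank v \<Longrightarrow> u = v"
  using length_le_if_word_rank_le[of u v] length_le_if_word_rank_le[of v u] word_bits_inj
  by (simp add: word_rank_def)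

lemma word_rank_append_mono:
  assumes "word_rank u \<le> word_rank u'" "word_rank v \<le> word_rank v'"
  shows "word_rank (u @ v) \<le> word_rank (u' @ v')"
    and "word_rank (u @ v) = word_rank (u' @ v') \<Longrightarrow> u = u' \<and> v = v'"
proof -
  have "word_rank (u @ v) \<le> word_rank (u' @ v') \<and>
        (word_rank (u @ v) = word_rank (u' @ v') \<longrightarrow> u = u' \<and> v = v')"
  proof (cases "length v = length v'")
    case True
    have vv: "word_bits v \<le> word_bits v'" using assms(2) True by (simp add: word_rank_def)
    have uu: "word_rank u * 2 ^ length v \<le> word_rank u' * 2 ^ length v" using assms(1) by simp
    have "word_rank (u @ v) = word_rank (u' @ v') \<Longrightarrow> u = u' \<and> v = v'"
    proof -
      assume "word_rank (u @ v) = word_rank (u' @ v')"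
      then have "word_rank u * 2 ^ length v + word_bits v = word_rank u' * 2 ^ length v + word_bits v'"
        using True by (simp add: word_rank_append)
      then have "word_rank u * 2 ^ length v = word_rank u' * 2 ^ length v"
        and "word_bits v = word_bits v'"
        using uu vv by linarith+
      then show "u = u' \<and> v = v'" using word_rank_inj word_bits_inj True by simp
    qed
    then show ?thesis using uu vv True by (simp add: word_rank_append add_mono)
  next
    case False
    then have lt: "length v < length v'" using length_le_if_word_rank_le[OF assms(2)] by simp
    have "word_rank (u @ v) < word_rank u * 2 ^ length v + 2 ^ length v"
      using word_bits_less[of v] by (simp add: word_rank_append)
    also have "\<dots> \<le> word_rank u * 2 ^ Suc (length v)" using word_rank_pos[of u] by simp
    also have "\<dots> \<le> word_rank u * 2 ^ length v'"
      using lt by (intro mult_left_mono power_increasing) auto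
    also have "\<dots> \<le> word_rank u' * 2 ^ length v'" using assms(1) by simp
    also have "\<dots> \<le> word_rank (u' @ v')" by (simp add: word_rank_append)
    finally show ?thesis by simp
  qed
  then show "word_rank (u @ v) \<le> word_rank (u' @ v')"
    and "word_rank (u @ v) = word_rank (u' @ v') \<Longrightarrow> u = u' \<and> v = v'" by auto
qed

lemma ex_max_word_rank:
  assumes "finite S" "S \<noteq> {}"
  obtains m where "m \<in> S" "\<And>w. w \<in> S \<Longrightarrow> word_rank (g w) \<le> word_rank (g m)"
proof -
  obtain m where "m \<in> S" "word_rank (g m) = Max ((word_rank \<circ> g) ` S)"
    using Max_in[of "(word_rank \<circ> g) ` S"] assms by fastforce
  then show ?thesis using that Max_ge[of "(word_rank \<circ> g) ` S"] assms(1) by auto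
qed

lemma fa_mult_lead:
  fixes p q :: "word \<Rightarrow> 'k::comm_semiring_1"
  assumes p: "\<And>u. p u \<noteq> 0 \<Longrightarrow> word_rank u \<le> word_rank a"
    and q: "\<And>v. q v \<noteq> 0 \<Longrightarrow> word_rank v \<le> word_rank b"
  shows "fa_mult p q w \<noteq> 0 \<Longrightarrow> word_rank w \<le> word_rank (a @ b)"
    and "fa_mult p q (a @ b) = p a * q b"
proof -
  assume "fa_mult p q w \<noteq> 0"
  then obtain uv where "uv \<in> {(u, v). u @ v = w}" "(case uv of (u, v) \<Rightarrow> p u * q v) \<noteq> 0"
    unfolding fa_mult_def by (meson sum.not_neutral_contains_not_neutral)
  then obtain u v where "u @ v = w" "p u * q v \<noteq> 0" by auto
  then have "u @ v = w" "p u \<noteq> 0" "q v \<noteq> 0" by auto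
  then show "word_rank w \<le> word_rank (a @ b)" using word_rank_append_mono(1)[OF p q] by blast
next
  have "fa_mult p q (a @ b)
      = (\<Sum>uv\<in>{(u, v). u @ v = a @ b}. if uv = (a, b) then p a * q b else 0)"
    unfolding fa_mult_def
  proof (rule sum.cong)
    fix x assume x: "x \<in> {(u, v). u @ v = a @ b}"
    obtain u v where uv: "x = (u, v)" by (cases x)
    show "(case x of (u, v) \<Rightarrow> p u * q v) = (if x = (a, b) then p a * q b else 0)"
    proof (cases "p u * q v = 0")
      case False
      then have "p u \<noteq> 0" "q v \<noteq> 0" by auto
      then have "u = a \<and> v = b" using word_rank_append_mono(2)[OF p q, of u v] x uv by auto
      then show ?thesis using uv by simp
    qed (use uv in auto)
  qed simp
  also have "\<dots> = p a * q b"
    using sum.delta[OF finite_splits[of "a @ b"], of "(a, b)" "\<lambda>_. p a * q b"] by simp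
  finally show "fa_mult p q (a @ b) = p a * q b" .
qed

lemma fa_subst_word_lead:
  fixes f :: "var \<Rightarrow> word \<Rightarrow> 'k::comm_semiring_1"
  assumes ld: "\<And>a u. f a u \<noteq> 0 \<Longrightarrow> word_rank u \<le> word_rank (ld a)"
  shows "fa_subst_word f w z \<noteq> 0 \<Longrightarrow> word_rank z \<le> word_rank (concat (map ld w))"
    and "fa_subst_word f w (concat (map ld w)) = prod_list (map (\<lambda>a. f a (ld a)) w)"
proof -
  have "(\<forall>z. fa_subst_word f w z \<noteq> 0 \<longrightarrow> word_rank z \<le> word_rank (concat (map ld w))) \<and>
        fa_subst_word f w (concat (map ld w)) = prod_list (map (\<lambda>a. f a (ld a)) w)"
  proof (induction w)
    case (Cons a w)
    have "\<And>u. f a u \<noteq> 0 \<Longrightarrow> word_rank u \<le> word_rank (ld a)" by (rule ld)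
    moreover have "\<And>v. fa_subst_word f w v \<noteq> 0 \<Longrightarrow> word_rank v \<le> word_rank (concat (map ld w))"
      using Cons.IH by blast
    ultimately show ?case
      using fa_mult_lead[of "f a" "ld a" "fa_subst_word f w" "concat (map ld w)"] Cons.IH by auto
  qed (auto simp: fa_one_def)
  then show "fa_subst_word f w z \<noteq> 0 \<Longrightarrow> word_rank z \<le> word_rank (concat (map ld w))"
    and "fa_subst_word f w (concat (map ld w)) = prod_list (map (\<lambda>a. f a (ld a)) w)" by auto
qed

section \<open>Free generation by words with independent letter counts\<close>

lemma concat_map_inj_if_heads_differ:
  assumes nonempty: "\<And>a. g a \<noteq> []"
    and heads: "\<And>a b r r'. a \<noteq> b \<Longrightarrow> concat (map g (a # r)) \<noteq> concat (map g (b # r'))"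
  shows "concat (map g m) = concat (map g m') \<Longrightarrow> m = m'"
proof (induction m arbitrary: m')
  case Nil
  then show ?case using nonempty by (cases m') auto
next
  case (Cons a r)
  then obtain b r' where m': "m' = b # r'" using nonempty by (cases m') auto
  with Cons.prems heads have "a = b" by blast
  with Cons m' show ?case by simp
qed

definition pair_subst :: "word \<Rightarrow> word \<Rightarrow> var \<Rightarrow> word" where
  "pair_subst u v a = (case a of X1 \<Rightarrow> u | X2 \<Rightarrow> v)"

fun subst1 :: "var \<Rightarrow> var list" where
  "subst1 X1 = [X1]"
| "subst1 X2 = [X1, X2]"

fun subst2 :: "var \<Rightarrow> var list" where
  "subst2 X1 = [X2, X1]"
| "subst2 X2 = [X2]"

lemma concat_map_pair_subst_subst1:
  "concat (map (pair_subst u (u @ w)) m) = concat (map (pair_subst u w) (concat (map subst1 m)))"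
proof (induction m)
  case (Cons a m) then show ?case by (cases a) (auto simp: pair_subst_def)
qed simp

lemma concat_map_pair_subst_subst2:
  "concat (map (pair_subst (v @ w) v) m) = concat (map (pair_subst w v) (concat (map subst2 m)))"
proof (induction m)
  case (Cons a m) then show ?case by (cases a) (auto simp: pair_subst_def)
qed simp

lemma concat_map_subst1_Cons_X2: "concat (map subst1 r) \<noteq> X2 # s"
proof (cases r)
  case (Cons a r') then show ?thesis by (cases a) auto
qed simp

lemma concat_map_subst2_Cons_X1: "concat (map subst2 r) \<noteq> X1 # s"
proof (cases r)
  case (Cons a r') then show ?thesis by (cases a) auto
qed simp

lemma concat_map_pair_subst_heads_differ_prefix1:
  assumes "inj (\<lambda>m. concat (map (pair_subst u w) m))"
  shows "concat (map (pair_subst u (u @ w)) (X1 # r)) \<noteq> concat (map (pair_subst u (u @ w)) (X2 # r'))"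
proof
  assume "concat (map (pair_subst u (u @ w)) (X1 # r)) = concat (map (pair_subst u (u @ w)) (X2 # r'))"
  then have "concat (map subst1 (X1 # r)) = concat (map subst1 (X2 # r'))"
    using assms concat_map_pair_subst_subst1[of u w] by (metis injD)
  then have "concat (map subst1 r) = X2 # concat (map subst1 r')" by simp
  then show False using concat_map_subst1_Cons_X2 by metis
qed

lemma concat_map_pair_subst_heads_differ_prefix2:
  assumes "inj (\<lambda>m. concat (map (pair_subst w v) m))"
  shows "concat (map (pair_subst (v @ w) v) (X1 # r)) \<noteq> concat (map (pair_subst (v @ w) v) (X2 # r'))"
proof
  assume "concat (map (pair_subst (v @ w) v) (X1 # r)) = concat (map (pair_subst (v @ w) v) (X2 # r'))"
  then have "concat (map subst2 (X1 # r)) = concat (map subst2 (X2 # r'))"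
    using assms concat_map_pair_subst_subst2[of v w] by (metis injD)
  then have "concat (map subst2 r') = X1 # concat (map subst2 r)" by simp
  then show False using concat_map_subst2_Cons_X1 by metis
qed

text \<open>Induction on \<open>|u| + |v|\<close>: two factorisations starting with different letters force
  one of \<open>u\<close>, \<open>v\<close> to be a prefix of the other, say \<open>v = u w\<close>; then \<open>u, w\<close> again have
  independent counts, and the substitution \<open>x\<^sub>2 \<mapsto> x\<^sub>1x\<^sub>2\<close> turns the factorisations over
  \<open>u, v\<close> into factorisations over \<open>u, w\<close>.\<close>
lemma concat_map_pair_subst_inj:
  assumes "cnt X1 u * cnt X2 v \<noteq> cnt X2 u * cnt X1 v"
  shows "inj (\<lambda>m. concat (map (pair_subst u v) m))"
  using assms
proof (induction "length u + length v" arbitrary: u v rule: less_induct)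
  case less
  have u: "u \<noteq> []" and v: "v \<noteq> []" using less.prems by auto
  have clash: "concat (map (pair_subst u v) (X1 # r)) \<noteq> concat (map (pair_subst u v) (X2 # r'))"
    for r r'
  proof
    assume e: "concat (map (pair_subst u v) (X1 # r)) = concat (map (pair_subst u v) (X2 # r'))"
    then have "u @ concat (map (pair_subst u v) r) = v @ concat (map (pair_subst u v) r')"
      by (simp add: pair_subst_def)
    then obtain w where "u = v @ w \<or> v = u @ w" by (auto simp: append_eq_append_conv2)
    then show False
    proof
      assume uv: "u = v @ w"
      with less v have "inj (\<lambda>m. concat (map (pair_subst w v) m))"
        by (intro less.hyps) (simp_all add: algebra_simps)
      with e uv show False using concat_map_pair_subst_heads_differ_prefix2 by blast
    next
      assume uv: "v = u @ w"
      with less u have "inj (\<lambda>m. concat (map (pair_subst u w) m))"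
        by (intro less.hyps) (simp_all add: algebra_simps)
      with e uv show False using concat_map_pair_subst_heads_differ_prefix1 by blast
    qed
  qed
  show ?case
  proof (rule injI, rule concat_map_inj_if_heads_differ)
    show "pair_subst u v a \<noteq> []" for a using u v by (cases a) (auto simp: pair_subst_def)
    show "concat (map (pair_subst u v) (a # r)) \<noteq> concat (map (pair_subst u v) (b # r'))"
      if "a \<noteq> b" for a b r r'
      using that clash[of r r'] clash[of r' r] by (cases a; cases b) metis+
  qed
qed

section \<open>Automorphisms with independent leading words are linear\<close>

lemma fa_aut_image_nonzero:
  fixes f :: "var \<Rightarrow> word \<Rightarrow> 'k::field"
  assumes "fa_aut f"
  shows "\<exists>w. f a w \<noteq> 0"
proof (rule ccontr)
  assume "\<not> (\<exists>w. f a w \<noteq> 0)"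
  then have "fa_apply f (fa_var a) = (\<lambda>_. 0)" by (auto simp: fa_apply_var)
  also have "\<dots> = fa_apply f (\<lambda>_. 0)" by (simp add: fa_apply_def)
  finally have "fa_apply f (fa_var a) = fa_apply f (\<lambda>_. 0)" .
  moreover have "fa_elem (\<lambda>_. 0 :: 'k)" by (simp add: fa_elem_def)
  ultimately have "(fa_var a :: word \<Rightarrow> 'k) = (\<lambda>_. 0)"
    using assms fa_elem_fa_var unfolding fa_aut_def bij_betw_def inj_on_def by blast
  then show False by (metis fa_var_def one_neq_zero)
qed

lemma ex_lead_words:
  fixes f :: "var \<Rightarrow> word \<Rightarrow> 'k::field"
  assumes "fa_aut f"
  obtains ld where "\<And>a. f a (ld a) \<noteq> 0"
    and "\<And>a u. f a u \<noteq> 0 \<Longrightarrow> word_rank u \<le> word_rank (ld a)"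
proof -
  have "\<exists>w. f a w \<noteq> 0 \<and> (\<forall>u. f a u \<noteq> 0 \<longrightarrow> word_rank u \<le> word_rank w)" for a
  proof -
    have "finite {w. f a w \<noteq> 0}" "{w. f a w \<noteq> 0} \<noteq> {}"
      using assms fa_aut_image_nonzero[OF assms, of a] by (auto simp: fa_aut_def fa_elem_def)
    then obtain m where "m \<in> {w. f a w \<noteq> 0}" "\<And>w. f a w \<noteq> 0 \<Longrightarrow> word_rank w \<le> word_rank m"
      by (rule ex_max_word_rank[where g = id]) auto
    then show ?thesis by auto
  qed
  then show ?thesis using that by metis
qed

text \<open>Injectivity of \<open>w \<mapsto> concat (map ld w)\<close> prevents cancellation of leading terms.\<close>
lemma fa_apply_at_lead:
  fixes f :: "var \<Rightarrow> word \<Rightarrow> 'k::comm_semiring_1"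
  assumes ld: "\<And>a u. f a u \<noteq> 0 \<Longrightarrow> word_rank u \<le> word_rank (ld a)"
    and inj: "inj (\<lambda>w. concat (map ld w))"
    and p: "fa_elem p" "p m \<noteq> 0"
    and max: "\<And>w. p w \<noteq> 0 \<Longrightarrow> word_rank (concat (map ld w)) \<le> word_rank (concat (map ld m))"
  shows "fa_apply f p (concat (map ld m)) = p m * prod_list (map (\<lambda>a. f a (ld a)) m)"
proof -
  let ?H = "\<lambda>w. concat (map ld w)"
  have other: "fa_subst_word f w (?H m) = 0" if "p w \<noteq> 0" "w \<noteq> m" for w
  proof (rule ccontr)
    assume "fa_subst_word f w (?H m) \<noteq> 0"
    with max[OF \<open>p w \<noteq> 0\<close>] fa_subst_word_lead(1)[where ld = ld, OF ld] have "?H w = ?H m"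
      by (meson antisym word_rank_inj)
    with inj that(2) show False by (auto dest: injD)
  qed
  have "fa_apply f p (?H m) = (\<Sum>w\<in>{w. p w \<noteq> 0}. if w = m then p m * fa_subst_word f m (?H m) else 0)"
    unfolding fa_apply_def by (rule sum.cong) (auto simp: other)
  also have "\<dots> = p m * fa_subst_word f m (?H m)"
    using p by (simp add: fa_elem_def)
  finally show ?thesis by (simp add: fa_subst_word_lead(2)[OF ld])
qed

text \<open>Surjectivity: some \<open>\<phi>(p)\<close> is the letter \<open>x\<^sub>t\<close>, and its leading word is that of \<open>\<phi>(m)\<close>
  for the leading word \<open>m\<close> of \<open>p\<close>.\<close>
lemma fa_aut_lead_word_letter:
  fixes f :: "var \<Rightarrow> word \<Rightarrow> 'k::field"
  assumes aut: "fa_aut f"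
    and ld_nonzero: "\<And>a. f a (ld a) \<noteq> 0"
    and ld: "\<And>a u. f a u \<noteq> 0 \<Longrightarrow> word_rank u \<le> word_rank (ld a)"
    and ld_nonempty: "\<And>a. ld a \<noteq> []"
    and inj: "inj (\<lambda>w. concat (map ld w))"
  shows "\<exists>a. ld a = [t]"
proof -
  let ?H = "\<lambda>w. concat (map ld w)"
  obtain p where p: "fa_elem p" "fa_apply f p = fa_var t"
    using aut fa_elem_fa_var unfolding fa_aut_def bij_betw_def by (metis image_iff mem_Collect_eq)
  have "{w. p w \<noteq> 0} \<noteq> {}"
  proof
    assume "{w. p w \<noteq> 0} = {}"
    then have "fa_apply f p [t] = 0" by (simp add: fa_apply_def)
    with p(2) show False by (simp add: fa_var_def)
  qed
  then obtain m where m: "p m \<noteq> 0" "\<And>w. p w \<noteq> 0 \<Longrightarrow> word_rank (?H w) \<le> word_rank (?H m)"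
    using p(1) ex_max_word_rank[of "{w. p w \<noteq> 0}" ?H] by (auto simp: fa_elem_def)
  have "fa_apply f p (?H m) \<noteq> 0"
    using fa_apply_at_lead[OF ld inj p(1) m] m(1) ld_nonzero by (auto simp: prod_list_zero_iff)
  then have Hm: "?H m = [t]" using p(2) by (simp add: fa_var_def split: if_splits)
  moreover have "length m \<le> length (?H m)"
  proof (induction m)
    case (Cons a m)
    have "1 \<le> length (ld a)" using ld_nonempty[of a] by (cases "ld a") auto
    with Cons show ?case by simp
  qed simp
  ultimately obtain a where "m = [a]" by (cases m rule: remdups_adj.cases) auto
  with Hm show ?thesis by auto
qed

lemma fa_aut_degree_le_1_if_odd_cnt:
  fixes f :: "var \<Rightarrow> word \<Rightarrow> 'k::field"
  assumes aut: "fa_aut f"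
    and odd: "\<And>u v. f X1 u \<noteq> 0 \<Longrightarrow> f X2 v \<noteq> 0 \<Longrightarrow> odd (cnt X1 u * cnt X2 v + cnt X2 u * cnt X1 v)"
    and "f c w \<noteq> 0"
  shows "length w \<le> 1"
proof -
  obtain ld where ld_nonzero: "\<And>a. f a (ld a) \<noteq> 0"
    and ld: "\<And>a u. f a u \<noteq> 0 \<Longrightarrow> word_rank u \<le> word_rank (ld a)"
    using ex_lead_words[OF aut] by blast
  have odd_ld: "odd (cnt X1 (ld X1) * cnt X2 (ld X2) + cnt X2 (ld X1) * cnt X1 (ld X2))"
    using odd ld_nonzero by blast
  then have "ld = pair_subst (ld X1) (ld X2)"
    by (auto simp: pair_subst_def split: var.splits)
  moreover have "cnt X1 (ld X1) * cnt X2 (ld X2) \<noteq> cnt X2 (ld X1) * cnt X1 (ld X2)"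
    using odd_ld by fastforce
  ultimately have inj: "inj (\<lambda>w. concat (map ld w))"
    by (metis concat_map_pair_subst_inj)
  have ld_nonempty: "ld a \<noteq> []" for a using odd_ld by (cases a) auto
  have "\<exists>a. ld a = [t]" for t
    by (rule fa_aut_lead_word_letter[where ld = ld, OF aut ld_nonzero ld ld_nonempty inj])
  then obtain a b where "ld a = [X1]" "ld b = [X2]" by metis
  then have "length (ld c) = 1" by (cases a; cases b; cases c) auto
  then show ?thesis using ld[OF \<open>f c w \<noteq> 0\<close>] length_le_if_word_rank_le by fastforce
qed

lemma odd_cnt_letters: "odd (cnt X1 [x] * cnt X2 [y] + cnt X2 [x] * cnt X1 [y]) \<longleftrightarrow> x \<noteq> y"
  by (cases x; cases y) auto

lemma in_G3_if_degree_le_1_odd_cnt: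
  fixes f :: "var \<Rightarrow> word \<Rightarrow> 'k::field"
  assumes aut: "fa_aut f"
    and odd: "\<And>u v. f X1 u \<noteq> 0 \<Longrightarrow> f X2 v \<noteq> 0 \<Longrightarrow> odd (cnt X1 u * cnt X2 v + cnt X2 u * cnt X1 v)"
    and degree: "\<And>c w. f c w \<noteq> 0 \<Longrightarrow> length w \<le> 1"
  shows "f \<in> G3"
proof -
  obtain u1 u2 where u1: "f X1 u1 \<noteq> 0" and u2: "f X2 u2 \<noteq> 0"
    using fa_aut_image_nonzero[OF aut] by metis
  have letter: "\<exists>x. w = [x]" if "f c w \<noteq> 0" for c w
  proof (cases w rule: remdups_adj.cases)
    case 1
    with that odd u1 u2 show ?thesis by (cases c) fastforce+
  qed (use degree that in fastforce)+
  obtain x y where x: "u1 = [x]" and y: "u2 = [y]" using letter u1 u2 by metis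
  have "x \<noteq> y" using odd_cnt_letters odd u1 u2 x y by metis
  have "f X1 w \<noteq> 0 \<Longrightarrow> w = [x]" for w
    using letter[of X1 w] odd[of w u2] u2 y \<open>x \<noteq> y\<close> odd_cnt_letters var_other by metis
  then have f1: "f X1 = fa_smult (f X1 [x]) (fa_var x)" by (rule fa_eq_smult_var_if_support)
  have "f X2 w \<noteq> 0 \<Longrightarrow> w = [y]" for w
    using letter[of X2 w] odd[of u1 w] u1 x \<open>x \<noteq> y\<close> odd_cnt_letters var_other by metis
  then have f2: "f X2 = fa_smult (f X2 [y]) (fa_var y)" by (rule fa_eq_smult_var_if_support)
  have "f X1 [x] \<noteq> 0" "f X2 [y] \<noteq> 0" using u1 u2 x y by simp_all
  with f1 f2 \<open>x \<noteq> y\<close> aut show ?thesis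
    unfolding G3_def by (cases x; cases y) auto
qed

section \<open>Automorphisms preserving the braiding\<close>

lemma braid_coeff_tau_diag:
  "braid_coeff (tau_of (-1) 1 1 (-1)) u v
   = (-1::'k::comm_ring_1) ^ (cnt X1 u * cnt X1 v + cnt X2 u * cnt X2 v)"
  by (simp add: braid_coeff_def UNIV_var tau_of_def power_add)

lemma braid_coeff_tau_antidiag:
  "braid_coeff (tau_of 1 (-1) (-1) 1) u v
   = (-1::'k::comm_ring_1) ^ (cnt X1 u * cnt X2 v + cnt X2 u * cnt X1 v)"
  by (simp add: braid_coeff_def UNIV_var tau_of_def power_add)

lemma minus_one_power_eq_iff:
  assumes "(2::'k::field) \<noteq> 0"
  shows "(-1::'k) ^ n = -1 \<longleftrightarrow> odd n" and "(-1::'k) ^ n = 1 \<longleftrightarrow> even n"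
proof -
  have "(1::'k) \<noteq> -1"
  proof
    assume "(1::'k) = -1"
    then have "(2::'k) = 0" by (metis one_add_one neg_eq_iff_add_eq_0)
    with assms show False ..
  qed
  then show "(-1::'k) ^ n = -1 \<longleftrightarrow> odd n" and "(-1::'k) ^ n = 1 \<longleftrightarrow> even n"
    by (auto simp: minus_one_power_iff)
qed

lemma tens_elem_monomial: "tens_elem (\<lambda>x. if x = (u, v) then (1::'k::zero_neq_one) else 0)"
proof -
  have "{uv. (if uv = (u, v) then (1::'k) else 0) \<noteq> 0} = {(u, v)}" by auto
  then show ?thesis by (simp add: tens_elem_def)
qed

lemma tens_apply_monomial:
  "tens_apply f (\<lambda>x. if x = (a, b) then (c::'k::comm_semiring_1) else 0) =
    (\<lambda>(z1, z2). c * fa_subst_word f a z1 * fa_subst_word f b z2)"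
proof (cases "c = 0")
  case False
  then have "{uv. (if uv = (a, b) then c else 0) \<noteq> 0} = {(a, b)}" by auto
  then show ?thesis by (simp add: tens_apply_def)
qed (simp add: tens_apply_def)

lemma braid_monomial:
  "braid Q (\<lambda>x. if x = (u, v) then 1 else 0) = (\<lambda>x. if x = (v, u) then braid_coeff Q u v else 0)"
  by (auto simp: braid_def)

lemma aut_braided_coeff_eq:
  fixes f :: "var \<Rightarrow> word \<Rightarrow> 'k::field"
  assumes "f \<in> aut_braided Q" "f v z1 \<noteq> 0" "f u z2 \<noteq> 0"
  shows "braid_coeff Q [u] [v] = braid_coeff Q z2 z1"
proof -
  let ?t = "\<lambda>x. if x = ([u], [v]) then (1::'k) else 0"
  have "tens_apply f (braid Q ?t) = braid Q (tens_apply f ?t)"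
    using assms(1) tens_elem_monomial unfolding aut_braided_def by blast
  then have "tens_apply f (braid Q ?t) (z1, z2) = braid Q (tens_apply f ?t) (z1, z2)" by simp
  then have "braid_coeff Q [u] [v] * f v z1 * f u z2 = braid_coeff Q z2 z1 * (f u z2 * f v z1)"
    by (simp add: braid_monomial tens_apply_monomial braid_def)
  with assms(2,3) show ?thesis by (simp add: mult.commute mult.left_commute)
qed

lemma odd_mixed_if_odd_squares:
  fixes a b c d :: nat
  assumes "odd (a * a + b * b)" "odd (c * c + d * d)" "even (a * c + b * d)"
  shows "odd (a * d + b * c)"
  using assms by (cases "even a"; cases "even b"; cases "even c"; cases "even d") auto

lemma aut_braided_odd_cnt:
  fixes f :: "var \<Rightarrow> word \<Rightarrow> 'k::field"
  assumes two: "(2::'k) \<noteq> 0"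
    and Q: "Q = tau_of (-1) 1 1 (-1) \<or> Q = tau_of 1 (-1) (-1) 1"
    and f: "f \<in> aut_braided Q" and u: "f X1 u \<noteq> 0" and v: "f X2 v \<noteq> 0"
  shows "odd (cnt X1 u * cnt X2 v + cnt X2 u * cnt X1 v)"
  using Q
proof
  assume Q: "Q = tau_of (-1) 1 1 (-1)"
  have "braid_coeff Q [X1] [X1] = braid_coeff Q u u" by (rule aut_braided_coeff_eq[OF f u u])
  then have "(-1::'k) ^ (cnt X1 u * cnt X1 u + cnt X2 u * cnt X2 u) = -1"
    by (simp add: Q braid_coeff_tau_diag)
  then have "odd (cnt X1 u * cnt X1 u + cnt X2 u * cnt X2 u)"
    using minus_one_power_eq_iff(1)[OF two] by blast
  moreover have "braid_coeff Q [X2] [X2] = braid_coeff Q v v" by (rule aut_braided_coeff_eq[OF f v v])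
  then have "(-1::'k) ^ (cnt X1 v * cnt X1 v + cnt X2 v * cnt X2 v) = -1"
    by (simp add: Q braid_coeff_tau_diag)
  then have "odd (cnt X1 v * cnt X1 v + cnt X2 v * cnt X2 v)"
    using minus_one_power_eq_iff(1)[OF two] by blast
  moreover have "braid_coeff Q [X1] [X2] = braid_coeff Q u v" by (rule aut_braided_coeff_eq[OF f v u])
  then have "(-1::'k) ^ (cnt X1 u * cnt X1 v + cnt X2 u * cnt X2 v) = 1"
    by (simp add: Q braid_coeff_tau_diag)
  then have "even (cnt X1 u * cnt X1 v + cnt X2 u * cnt X2 v)"
    using minus_one_power_eq_iff(2)[OF two] by blast
  ultimately show ?thesis by (rule odd_mixed_if_odd_squares)
next
  assume Q: "Q = tau_of 1 (-1) (-1) 1"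
  have "braid_coeff Q [X1] [X2] = braid_coeff Q u v" by (rule aut_braided_coeff_eq[OF f v u])
  then have "(-1::'k) ^ (cnt X1 u * cnt X2 v + cnt X2 u * cnt X1 v) = -1"
    by (simp add: Q braid_coeff_tau_antidiag)
  then show ?thesis using minus_one_power_eq_iff(1)[OF two] by blast
qed

section \<open>Linear automorphisms permuting the letters\<close>

lemma fa_subst_word_permute:
  assumes "\<And>a. f a = fa_smult (c a) (fa_var (s a))"
  shows "fa_subst_word f w = (\<lambda>z. if z = map s w then prod_list (map c w) else (0::'k::comm_semiring_1))"
proof (induction w)
  case (Cons a w)
  have fa: "f a = (\<lambda>z. if z = [s a] then c a else 0)" using assms[of a]
    by (auto simp: fa_smult_def fa_var_def)
  show ?case by (simp add: Cons.IH fa fa_mult_monomials cong: if_cong)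
qed (simp add: fa_one_def fun_eq_iff)

lemma tens_apply_permute:
  fixes f :: "var \<Rightarrow> word \<Rightarrow> 'k::comm_semiring_1"
  assumes f: "\<And>a. f a = fa_smult (c a) (fa_var (s a))" and s: "\<And>a. s (s a) = a"
    and t: "tens_elem t"
  shows "tens_apply f t (z1, z2)
       = t (map s z1, map s z2) * prod_list (map c (map s z1)) * prod_list (map c (map s z2))"
proof -
  let ?c = "t (map s z1, map s z2) * prod_list (map c (map s z1)) * prod_list (map c (map s z2))"
  have "map s (map s w) = w" for w using s by (induction w) auto
  then have map_s_eq: "z = map s u \<longleftrightarrow> u = map s z" for z u by metis
  have "tens_apply f t (z1, z2) = (\<Sum>uv\<in>{uv. t uv \<noteq> 0}. if uv = (map s z1, map s z2) then ?c else 0)"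
    unfolding tens_apply_def fa_subst_word_permute[OF f]
    by (simp, rule sum.cong) (auto simp: map_s_eq split: if_splits)
  also have "\<dots> = ?c"
    using t by (cases "t (map s z1, map s z2) = 0") (auto simp: tens_elem_def)
  finally show ?thesis .
qed

lemma tens_elem_braid: "tens_elem t \<Longrightarrow> tens_elem (braid Q t)"
proof -
  assume t: "tens_elem t"
  have "{x. braid Q t x \<noteq> 0} \<subseteq> (\<lambda>(a, b). (b, a)) ` {x. t x \<noteq> 0}"
    by (auto simp: braid_def image_iff)
  with t show ?thesis unfolding tens_elem_def by (meson finite_imageI finite_subset)
qed

lemma tens_apply_braid_permute:
  fixes f :: "var \<Rightarrow> word \<Rightarrow> 'k::comm_semiring_1"
  assumes f: "\<And>a. f a = fa_smult (c a) (fa_var (s a))" and s: "\<And>a. s (s a) = a"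
    and Q: "\<And>u v. braid_coeff Q (map s u) (map s v) = braid_coeff Q u v"
    and t: "tens_elem t"
  shows "tens_apply f (braid Q t) = braid Q (tens_apply f t)"
proof (rule ext, clarify)
  fix z1 z2
  show "tens_apply f (braid Q t) (z1, z2) = braid Q (tens_apply f t) (z1, z2)"
    using tens_apply_permute[OF f s t, of z2 z1] tens_apply_permute[OF f s tens_elem_braid[OF t]] Q[of z2 z1]
    by (simp add: braid_def mult_ac)
qed

fun var_swap :: "var \<Rightarrow> var" where
  "var_swap X1 = X2"
| "var_swap X2 = X1"

lemma cnt_map_var_swap: "cnt X1 (map var_swap w) = cnt X2 w" "cnt X2 (map var_swap w) = cnt X1 w"
proof (induction w)
  case (Cons a w)
  { case 1 show ?case using Cons by (cases a) auto
  next
    case 2 show ?case using Cons by (cases a) auto }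
qed simp_all

lemma G3_subset_aut_braided:
  assumes Q: "Q = tau_of (-1) 1 1 (-1) \<or> Q = tau_of 1 (-1) (-1) 1"
  shows "G3 \<subseteq> aut_braided (Q :: var \<Rightarrow> var \<Rightarrow> 'k::field)"
proof
  fix f :: "var \<Rightarrow> word \<Rightarrow> 'k" assume f: "f \<in> G3"
  then have aut: "fa_aut f" by (simp add: G3_def)
  from f consider (diag) a1 b2 where "f X1 = fa_smult a1 (fa_var X1)" "f X2 = fa_smult b2 (fa_var X2)"
    | (antidiag) b1 a2 where "f X1 = fa_smult b1 (fa_var X2)" "f X2 = fa_smult a2 (fa_var X1)"
    unfolding G3_def by blast
  then show "f \<in> aut_braided Q"
  proof cases
    case diag
    then have f: "f a = fa_smult (case a of X1 \<Rightarrow> a1 | X2 \<Rightarrow> b2) (fa_var (id a))" for a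
      by (cases a) auto
    have "tens_apply f (braid Q t) = braid Q (tens_apply f t)" if "tens_elem t" for t
      by (rule tens_apply_braid_permute[OF f _ _ that]) simp_all
    with aut show ?thesis unfolding aut_braided_def by blast
  next
    case antidiag
    then have f: "f a = fa_smult (case a of X1 \<Rightarrow> b1 | X2 \<Rightarrow> a2) (fa_var (var_swap a))" for a
      by (cases a) auto
    have swap: "var_swap (var_swap a) = a" for a by (cases a) auto
    have "braid_coeff Q (map var_swap u) (map var_swap v) = braid_coeff Q u v" for u v
      using Q by (auto simp: braid_coeff_tau_diag braid_coeff_tau_antidiag cnt_map_var_swap add_ac mult_ac)
    then have "tens_apply f (braid Q t) = braid Q (tens_apply f t)" if "tens_elem t" for t
      by (rule tens_apply_braid_permute[OF f swap _ that])
    with aut show ?thesis unfolding aut_braided_def by blast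
  qed
qed

theorem lemma4:
  fixes Q :: "var \<Rightarrow> var \<Rightarrow> 'k::field"
  assumes "(2::'k) \<noteq> 0"
    and "Q = tau_of (-1) 1 1 (-1) \<or> Q = tau_of 1 (-1) (-1) 1"
  shows "aut_braided Q = G3"
proof
  show "aut_braided Q \<subseteq> G3"
  proof
    fix f assume f: "f \<in> aut_braided Q"
    then have aut: "fa_aut f" by (simp add: aut_braided_def)
    have odd: "\<And>u v. f X1 u \<noteq> 0 \<Longrightarrow> f X2 v \<noteq> 0 \<Longrightarrow> odd (cnt X1 u * cnt X2 v + cnt X2 u * cnt X1 v)"
      by (rule aut_braided_odd_cnt[OF assms f])
    have "\<And>c w. f c w \<noteq> 0 \<Longrightarrow> length w \<le> 1"
      using aut odd by (rule fa_aut_degree_le_1_if_odd_cnt)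
    with aut odd show "f \<in> G3" by (rule in_G3_if_degree_le_1_odd_cnt)
  qed
  show "G3 \<subseteq> aut_braided Q" using assms(2) by (rule G3_subset_aut_braided)
qed

end
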